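(* Let $(X,d)$ be a compact metric space, $f_{0,\infty}=\{f_n\}_{n=0}^{\infty}$ a sequence of continuous self-maps of $X$, and $A=\{a_i\}_{i=1}^{\infty}\in\mathcal{S}$. Let $\{\alpha_n\}_{n=0}^{\infty}$ be a sequence of open covers of $X$ with $\mathrm{diam}(\alpha_n)\to0$ as $n\to\infty$. Then \[\lim_{n\to\infty}h_{A}(f_{0,\infty},\alpha_n)=h_{A}(f_{0,\infty}),\] and consequently \[h_{A}(f_{0,\infty})=\lim_{\delta\to0}\sup\{h_{A}(f_{0,\infty},\alpha): \alpha \text{ an open cover of } X,\ \mathrm{diam}(\alpha)<\delta\}.\]
   Context: For $i\ge0$, $n\ge1$ write $f_i^n=f_{i+n-1}\circ\cdots\circ f_i$, $f_i^0=\mathrm{id}_X$, $f_i^{-n}(B)=(f_i^n)^{-1}(B)$. $\mathcal S$ is the set of strictly increasing sequences of nonnegative integers. For open covers, $\bigvee_{i=1}^n\mathscr A_i=\{\bigcap_i U_i:U_i\in\mathscr A_i\}$, $f_0^{-a}\mathscr A=\{f_0^{-a}(U):U\in\mathscr A\}$, and $\mathcal N(\mathscr B)$ is the minimal cardinality of a subcover of $\mathscr B$. For an open cover $\mathscr A$, $h_A(f_{0,\infty},\mathscr A)=\limsup_{n\to\infty}\frac1n\log\mathcal N(\bigvee_{i=1}^n f_0^{-a_i}\mathscr A)$ and $h_A(f_{0,\infty})=\sup_{\mathscr A}h_A(f_{0,\infty},\mathscr A)$ over finite open covers. The diameter of a cover $\alpha$ is $\mathrm{diam}(\alpha)=\sup_{U\in\alpha}\sup_{x,y\in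 U}d(x,y)$. *)

theory Defs
  imports "HOL-Analysis.Analysis"
begin

fun fiter :: "(nat \<Rightarrow> 'a \<Rightarrow> 'a) \<Rightarrow> nat \<Rightarrow> nat \<Rightarrow> 'a \<Rightarrow> 'a" where
  "fiter f i 0 = id"
| "fiter f i (Suc n) = f (i + n) \<circ> fiter f i n"

definition open_cover :: "'a::metric_space set \<Rightarrow> 'a set set \<Rightarrow> bool" where
  "open_cover X \<A> \<longleftrightarrow> (\<forall>U\<in>\<A>. openin (top_of_set X) U) \<and> \<Union>\<A> = X"

definition preimage_cover :: "'a set \<Rightarrow> (nat \<Rightarrow> 'a \<Rightarrow> 'a) \<Rightarrow> nat \<Rightarrow> 'a set set \<Rightarrow> 'a set set" where
  "preimage_cover X f a \<A> = (\<lambda>U. {x\<in>X. fiter f 0 a x \<in> U}) ` \<A>"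

definition join_covers :: "'a set \<Rightarrow> nat \<Rightarrow> (nat \<Rightarrow> 'a set set) \<Rightarrow> 'a set set" where
  "join_covers X n \<A> = {(\<Inter>i\<in>{1..n}. U i) \<inter> X | U. \<forall>i\<in>{1..n}. U i \<in> \<A> i}"

definition min_subcover_card :: "'a set \<Rightarrow> 'a set set \<Rightarrow> nat" where
  "min_subcover_card X \<B> = (LEAST k. \<exists>\<C>\<subseteq>\<B>. finite \<C> \<and> \<Union>\<C> = X \<and> card \<C> = k)"

definition hA_cover :: "'a::metric_space set \<Rightarrow> (nat \<Rightarrow> 'a \<Rightarrow> 'a) \<Rightarrow> (nat \<Rightarrow> nat) \<Rightarrow> 'a set set \<Rightarrow> ereal" where
  "hA_cover X f a \<A> = limsup (\<lambda>n. ereal (ln (real (min_subcover_card X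
       (join_covers X n (\<lambda>i. preimage_cover X f (a i) \<A>)))) / real n))"

definition hA :: "'a::metric_space set \<Rightarrow> (nat \<Rightarrow> 'a \<Rightarrow> 'a) \<Rightarrow> (nat \<Rightarrow> nat) \<Rightarrow> ereal" where
  "hA X f a = (SUP \<A>\<in>{\<A>. open_cover X \<A> \<and> finite \<A>}. hA_cover X f a \<A>)"

definition cover_diam :: "'a::metric_space set set \<Rightarrow> real" where
  "cover_diam \<A> = (SUP U\<in>\<A>. diameter U)"

end

theory Submission
  imports Defs
begin

text \<open>If every nonempty member of a cover \<open>\<A>\<close> lies in a member of \<open>\<B>\<close>, the same holds for
  the joins of their preimages under the iterates \<open>fiter f 0 (a i)\<close>; sending each member of a
  minimal subcover of the join for \<open>\<A>\<close> to a superset in the join for \<open>\<B>\<close> shows that the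
  latter needs no more sets, hence \<open>h\<^sub>A(\<B>) \<le> h\<^sub>A(\<A>)\<close>. A finite subcover refines its
  cover, so \<open>h\<^sub>A(\<U>) \<le> h\<^sub>A\<close> for every open cover \<open>\<U>\<close>. Conversely, by the Lebesgue number
  lemma every open cover of small enough diameter refines a given open cover \<open>\<U>\<close>, and so has
  entropy at least \<open>h\<^sub>A(\<U>)\<close>.\<close>

text \<open>Empty members are exempt; otherwise the open cover \<open>{{}}\<close> of \<open>X = {}\<close> would not refine
  the open cover \<open>{}\<close>.\<close>

definition refines_cover :: "'a set set \<Rightarrow> 'a set set \<Rightarrow> bool" where
  "refines_cover \<A> \<B> \<longleftrightarrow> (\<forall>V\<in>\<A>. V \<noteq> {} \<longrightarrow> (\<exists>W\<in>\<B>. V \<subseteq> W))"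

abbreviation orbit_join ::
    "'a set \<Rightarrow> (nat \<Rightarrow> 'a \<Rightarrow> 'a) \<Rightarrow> (nat \<Rightarrow> nat) \<Rightarrow> nat \<Rightarrow> 'a set set \<Rightarrow> 'a set set"
  where "orbit_join X f a n \<A> \<equiv> join_covers X n (\<lambda>i. preimage_cover X f (a i) \<A>)"

lemma fiter_image_subset:
  assumes "\<And>n. f n ` X \<subseteq> X"
  shows "fiter f i k ` X \<subseteq> X"
  by (induction k) (use assms in auto)

lemma continuous_on_fiter:
  assumes "\<And>n. continuous_on X (f n)" and "\<And>n. f n ` X \<subseteq> X"
  shows "continuous_on X (fiter f i k)"
proof (induction k)
  case (Suc k)
  then show ?case
    using assms fiter_image_subset[of f X i k] by (auto intro: continuous_on_compose2)
qed simp

lemma open_cover_preimage_cover: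
  assumes "continuous_on X (fiter f 0 k)" and "fiter f 0 k ` X \<subseteq> X" and "open_cover X \<A>"
  shows "open_cover X (preimage_cover X f k \<A>)"
  unfolding open_cover_def preimage_cover_def
proof safe
  fix V assume "V \<in> \<A>"
  then have "openin (top_of_set X) (X \<inter> fiter f 0 k -` V)"
    using assms by (intro continuous_openin_preimage[where T = X]) (auto simp: open_cover_def)
  then show "openin (top_of_set X) {x \<in> X. fiter f 0 k x \<in> V}"
    by (simp add: Int_def)
next
  fix x assume "x \<in> X"
  then obtain V where "V \<in> \<A>" "fiter f 0 k x \<in> V"
    using assms(2,3) unfolding open_cover_def by blast
  with \<open>x \<in> X\<close> show "x \<in> \<Union> ((\<lambda>V. {x \<in> X. fiter f 0 k x \<in> V}) ` \<A>)" by blast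
qed

lemma join_covers_memI:
  assumes "\<And>i. i \<in> {1..n} \<Longrightarrow> U i \<in> \<A> i"
  shows "(\<Inter>i\<in>{1..n}. U i) \<inter> X \<in> join_covers X n \<A>"
  unfolding join_covers_def using assms by (intro CollectI exI[of _ U]) simp

lemma join_covers_memE:
  assumes "E \<in> join_covers X n \<A>"
  obtains U where "E = (\<Inter>i\<in>{1..n}. U i) \<inter> X" "\<forall>i\<in>{1..n}. U i \<in> \<A> i"
  using assms unfolding join_covers_def by blast

lemma Union_join_covers_subset: "\<Union>(join_covers X n \<A>) \<subseteq> X"
  by (auto elim: join_covers_memE)

lemma open_cover_join_covers:
  assumes "\<And>i. i \<in> {1..n} \<Longrightarrow> open_cover X (\<A> i)"
  shows "open_cover X (join_covers X n \<A>)"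
  unfolding open_cover_def
proof (intro conjI ballI subset_antisym Union_join_covers_subset)
  fix E assume "E \<in> join_covers X n \<A>"
  then obtain U where E: "E = (\<Inter>i\<in>{1..n}. U i) \<inter> X" and U: "\<forall>i\<in>{1..n}. U i \<in> \<A> i"
    by (rule join_covers_memE)
  have "openin (top_of_set X) ((\<Inter>i\<in>{1..n}. U i) \<inter> topspace (top_of_set X))"
    using assms U by (intro openin_INT) (auto simp: open_cover_def)
  with E show "openin (top_of_set X) E" by simp
next
  show "X \<subseteq> \<Union>(join_covers X n \<A>)"
  proof
    fix x assume "x \<in> X"
    then have "\<forall>i\<in>{1..n}. \<exists>U. U \<in> \<A> i \<and> x \<in> U"
      using assms unfolding open_cover_def by blast
    from bchoice[OF this] obtain U where U: "\<forall>i\<in>{1..n}. U i \<in> \<A> i \<and> x \<in> U i"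
      by blast
    then have "(\<Inter>i\<in>{1..n}. U i) \<inter> X \<in> join_covers X n \<A>"
      by (intro join_covers_memI) blast
    with U \<open>x \<in> X\<close> show "x \<in> \<Union>(join_covers X n \<A>)" by blast
  qed
qed

lemma refines_preimage_cover:
  assumes "refines_cover \<A> \<B>"
  shows "refines_cover (preimage_cover X f k \<A>) (preimage_cover X f k \<B>)"
proof (unfold refines_cover_def, intro ballI impI)
  fix P assume "P \<in> preimage_cover X f k \<A>" "P \<noteq> {}"
  then obtain V where "V \<in> \<A>" "V \<noteq> {}" and P: "P = {x \<in> X. fiter f 0 k x \<in> V}"
    unfolding preimage_cover_def by blast
  then obtain W where "W \<in> \<B>" "V \<subseteq> W"
    using assms unfolding refines_cover_def by blast
  have "{x \<in> X. fiter f 0 k x \<in> W} \<in> preimage_cover X f k \<B>"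
    using \<open>W \<in> \<B>\<close> unfolding preimage_cover_def by (rule imageI)
  moreover have "P \<subseteq> {x \<in> X. fiter f 0 k x \<in> W}"
    using P \<open>V \<subseteq> W\<close> by blast
  ultimately show "\<exists>Q\<in>preimage_cover X f k \<B>. P \<subseteq> Q"
    by blast
qed

lemma refines_join_covers:
  assumes "\<And>i. i \<in> {1..n} \<Longrightarrow> refines_cover (\<A> i) (\<B> i)"
  shows "refines_cover (join_covers X n \<A>) (join_covers X n \<B>)"
proof (unfold refines_cover_def, intro ballI impI)
  fix E assume "E \<in> join_covers X n \<A>" and "E \<noteq> {}"
  from \<open>E \<in> join_covers X n \<A>\<close> obtain U
    where E: "E = (\<Inter>i\<in>{1..n}. U i) \<inter> X" and U: "\<forall>i\<in>{1..n}. U i \<in> \<A> i"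
    by (rule join_covers_memE)
  obtain x where "x \<in> E"
    using \<open>E \<noteq> {}\<close> by blast
  have "\<exists>W. W \<in> \<B> i \<and> U i \<subseteq> W" if "i \<in> {1..n}" for i
  proof -
    have "U i \<noteq> {}"
      using \<open>x \<in> E\<close> E that by blast
    then show ?thesis
      using assms[OF that] U that unfolding refines_cover_def by blast
  qed
  then have "\<forall>i\<in>{1..n}. \<exists>W. W \<in> \<B> i \<and> U i \<subseteq> W"
    by blast
  from bchoice[OF this] obtain W where W: "\<forall>i\<in>{1..n}. W i \<in> \<B> i \<and> U i \<subseteq> W i"
    by blast
  then have "(\<Inter>i\<in>{1..n}. W i) \<inter> X \<in> join_covers X n \<B>"
    by (intro join_covers_memI) blast
  moreover have "E \<subseteq> (\<Inter>i\<in>{1..n}. W i) \<inter> X"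
    using E W by blast
  ultimately show "\<exists>E'\<in>join_covers X n \<B>. E \<subseteq> E'" by blast
qed

lemma open_cover_finite_subcover:
  assumes "compact X" and "open_cover X \<A>"
  obtains \<C> where "\<C> \<subseteq> \<A>" "finite \<C>" "\<Union>\<C> = X"
proof -
  have "\<exists>\<C>\<subseteq>\<A>. finite \<C> \<and> X \<subseteq> \<Union>\<C>"
    using assms unfolding compact_eq_openin_cover open_cover_def by blast
  then obtain \<C> where "\<C> \<subseteq> \<A>" "finite \<C>" "X \<subseteq> \<Union>\<C>"
    by blast
  moreover have "\<Union>\<C> \<subseteq> X"
    using \<open>\<C> \<subseteq> \<A>\<close> assms(2) unfolding open_cover_def by blast
  ultimately show thesis
    by (intro that) auto
qed

lemma min_subcover_card_le:
  assumes "\<C> \<subseteq> \<B>" "finite \<C>" "\<Union>\<C> = X"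
  shows "min_subcover_card X \<B> \<le> card \<C>"
  unfolding min_subcover_card_def using assms by (intro Least_le exI[of _ \<C>]) simp

lemma obtain_minimal_subcover:
  assumes "\<exists>\<C>\<subseteq>\<A>. finite \<C> \<and> \<Union>\<C> = X"
  obtains \<C> where "\<C> \<subseteq> \<A>" "finite \<C>" "\<Union>\<C> = X" "card \<C> = min_subcover_card X \<A>"
proof -
  have "\<exists>\<C>\<subseteq>\<A>. finite \<C> \<and> \<Union>\<C> = X \<and> card \<C> = min_subcover_card X \<A>"
    unfolding min_subcover_card_def by (rule LeastI_ex) (use assms in blast)
  with that show thesis by blast
qed

lemma min_subcover_card_le_of_refines:
  assumes "\<exists>\<C>\<subseteq>\<A>. finite \<C> \<and> \<Union>\<C> = X" and "\<Union>\<B> \<subseteq> X" and "refines_cover \<A> \<B>"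
  shows "min_subcover_card X \<B> \<le> min_subcover_card X \<A>"
proof -
  obtain \<C> where \<C>: "\<C> \<subseteq> \<A>" "finite \<C>" "\<Union>\<C> = X" "card \<C> = min_subcover_card X \<A>"
    using assms(1) by (rule obtain_minimal_subcover)
  let ?\<C>' = "{E\<in>\<C>. E \<noteq> {}}"
  have "\<forall>E\<in>?\<C>'. \<exists>W. W \<in> \<B> \<and> E \<subseteq> W"
    using \<C>(1) assms(3) unfolding refines_cover_def by blast
  from bchoice[OF this] obtain g where g: "\<forall>E\<in>?\<C>'. g E \<in> \<B> \<and> E \<subseteq> g E"
    by blast
  have "\<Union>(g ` ?\<C>') = X"
  proof
    show "\<Union>(g ` ?\<C>') \<subseteq> X"
      using g assms(2) by blast
    show "X \<subseteq> \<Union>(g ` ?\<C>')"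
      using g \<C>(3) by blast
  qed
  then have "min_subcover_card X \<B> \<le> card (g ` ?\<C>')"
    using g \<C>(2) by (intro min_subcover_card_le) auto
  also have "\<dots> \<le> card ?\<C>'"
    using \<C>(2) by (intro card_image_le) simp
  also have "\<dots> \<le> card \<C>"
    using \<C>(2) by (intro card_mono) auto
  finally show ?thesis
    using \<C>(4) by simp
qed

lemma hA_cover_mono:
  assumes "\<And>n. min_subcover_card X (orbit_join X f a n \<B>) \<le> min_subcover_card X (orbit_join X f a n \<A>)"
  shows "hA_cover X f a \<B> \<le> hA_cover X f a \<A>"
  unfolding hA_cover_def
proof (intro Limsup_mono always_eventually allI)
  fix n
  let ?p = "min_subcover_card X (orbit_join X f a n \<B>)"
  let ?q = "min_subcover_card X (orbit_join X f a n \<A>)"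
  \<comment> \<open>\<open>ln 0 = 0\<close>, so the degenerate case \<open>?p = 0\<close> is harmless.\<close>
  have "ln (real ?p) \<le> ln (real ?q)"
    using assms[of n] by (cases "?p = 0"; cases "?q = 0") auto
  then show "ereal (ln (real ?p) / real n) \<le> ereal (ln (real ?q) / real n)"
    by (simp add: divide_right_mono)
qed

lemma hA_cover_le_of_refines:
  assumes "compact X" and "\<And>n. continuous_on X (f n)" and "\<And>n. f n ` X \<subseteq> X"
    and "open_cover X \<A>" and "refines_cover \<A> \<B>"
  shows "hA_cover X f a \<B> \<le> hA_cover X f a \<A>"
proof (intro hA_cover_mono min_subcover_card_le_of_refines)
  fix n
  have "open_cover X (preimage_cover X f k \<A>)" for k
    using continuous_on_fiter[OF assms(2,3)] fiter_image_subset[OF assms(3)] assms(4)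
    by (rule open_cover_preimage_cover)
  then have "open_cover X (orbit_join X f a n \<A>)"
    by (rule open_cover_join_covers)
  then obtain \<C> where "\<C> \<subseteq> orbit_join X f a n \<A>" "finite \<C>" "\<Union>\<C> = X"
    using assms(1) open_cover_finite_subcover by blast
  then show "\<exists>\<C>\<subseteq>orbit_join X f a n \<A>. finite \<C> \<and> \<Union>\<C> = X"
    by blast
  show "\<Union>(orbit_join X f a n \<B>) \<subseteq> X"
    by (rule Union_join_covers_subset)
  show "refines_cover (orbit_join X f a n \<A>) (orbit_join X f a n \<B>)"
    using assms(5) by (intro refines_join_covers refines_preimage_cover)
qed

lemma hA_cover_le_hA:
  assumes "compact X" and "\<And>n. continuous_on X (f n)" and "\<And>n. f n ` X \<subseteq> X"
    and "open_cover X \<U>"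
  shows "hA_cover X f a \<U> \<le> hA X f a"
proof -
  obtain \<C> where \<C>: "\<C> \<subseteq> \<U>" "finite \<C>" "\<Union>\<C> = X"
    using assms(1,4) by (rule open_cover_finite_subcover)
  then have "open_cover X \<C>"
    using assms(4) unfolding open_cover_def by blast
  have "hA_cover X f a \<U> \<le> hA_cover X f a \<C>"
    using \<C>(1) by (intro hA_cover_le_of_refines[OF assms(1-3) \<open>open_cover X \<C>\<close>])
      (auto simp: refines_cover_def)
  also have "\<dots> \<le> hA X f a"
    unfolding hA_def using \<open>open_cover X \<C>\<close> \<C>(2) by (intro SUP_upper) auto
  finally show ?thesis .
qed

lemma open_cover_Lebesgue_number:
  fixes X :: "'a::metric_space set"
  assumes "compact X" and "open_cover X \<U>"
  obtains \<delta> where "\<delta> > 0"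
    "\<And>T. T \<subseteq> X \<Longrightarrow> T \<noteq> {} \<Longrightarrow> diameter T < \<delta> \<Longrightarrow> \<exists>U\<in>\<U>. T \<subseteq> U"
proof (cases "X = {}")
  case False
  define \<G> where "\<G> = {G. open G \<and> X \<inter> G \<in> \<U>}"
  have "X \<subseteq> \<Union>\<G>"
    using assms(2) unfolding open_cover_def \<G>_def by (force simp: openin_open)
  with False obtain \<delta> where "\<delta> > 0"
    and \<delta>: "\<And>T. T \<subseteq> X \<Longrightarrow> diameter T < \<delta> \<Longrightarrow> \<exists>G\<in>\<G>. T \<subseteq> G"
    using Lebesgue_number_lemma[OF assms(1), of \<G>] unfolding \<G>_def by blast
  show thesis
  proof (rule that)
    fix T assume "T \<subseteq> X" "diameter T < \<delta>"
    then obtain G where "G \<in> \<G>" "T \<subseteq> G"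
      using \<delta> by blast
    with \<open>T \<subseteq> X\<close> show "\<exists>U\<in>\<U>. T \<subseteq> U"
      unfolding \<G>_def by blast
  qed fact
next
  case True
  show thesis
    by (rule that[of 1]) (use True in auto)
qed

lemma diameter_le_cover_diam:
  assumes "bounded (\<Union>\<beta>)" and "V \<in> \<beta>"
  shows "diameter V \<le> cover_diam \<beta>"
proof -
  have "bdd_above (diameter ` \<beta>)"
    using assms(1) by (intro bdd_aboveI[of _ "diameter (\<Union>\<beta>)"]) (auto intro: diameter_subset)
  then show ?thesis
    unfolding cover_diam_def using assms(2) by (rule cSUP_upper2) simp
qed

lemma small_open_covers_refine:
  fixes X :: "'a::metric_space set"
  assumes "compact X" and "open_cover X \<U>"
  obtains \<delta> where "\<delta> > 0" "\<And>\<beta>. open_cover X \<beta> \<Longrightarrow> cover_diam \<beta> < \<delta> \<Longrightarrow> refines_cover \<beta> \<U>"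
proof -
  obtain \<delta> where "\<delta> > 0"
    and \<delta>: "\<And>T. T \<subseteq> X \<Longrightarrow> T \<noteq> {} \<Longrightarrow> diameter T < \<delta> \<Longrightarrow> \<exists>U\<in>\<U>. T \<subseteq> U"
    using open_cover_Lebesgue_number[OF assms] by blast
  have "refines_cover \<beta> \<U>" if "open_cover X \<beta>" "cover_diam \<beta> < \<delta>" for \<beta>
  proof (unfold refines_cover_def, intro ballI impI)
    fix V assume "V \<in> \<beta>" "V \<noteq> {}"
    have "\<Union>\<beta> = X"
      using \<open>open_cover X \<beta>\<close> unfolding open_cover_def by blast
    then have "diameter V < \<delta>"
      using diameter_le_cover_diam[of \<beta> V] \<open>V \<in> \<beta>\<close> \<open>cover_diam \<beta> < \<delta>\<close> assms(1)
      by (simp add: compact_imp_bounded)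
    moreover have "V \<subseteq> X"
      using \<open>V \<in> \<beta>\<close> \<open>\<Union>\<beta> = X\<close> by blast
    ultimately show "\<exists>U\<in>\<U>. V \<subseteq> U"
      using \<delta> \<open>V \<noteq> {}\<close> by blast
  qed
  with \<open>\<delta> > 0\<close> show thesis
    using that by blast
qed

lemma hA_cover_tendsto_hA:
  fixes X :: "'a::metric_space set"
  assumes "compact X" and "\<And>n. continuous_on X (f n)" and "\<And>n. f n ` X \<subseteq> X"
    and "\<And>n. open_cover X (\<alpha> n)" and "(\<lambda>n. cover_diam (\<alpha> n)) \<longlonglongrightarrow> 0"
  shows "(\<lambda>n. hA_cover X f a (\<alpha> n)) \<longlonglongrightarrow> hA X f a"
proof (rule order_tendstoI)
  fix y assume "y < hA X f a"
  then obtain \<U> where \<U>: "open_cover X \<U>" "y < hA_cover X f a \<U>"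
    unfolding hA_def less_SUP_iff by blast
  obtain \<delta> where "\<delta> > 0" and \<delta>: "\<And>\<beta>. open_cover X \<beta> \<Longrightarrow> cover_diam \<beta> < \<delta> \<Longrightarrow> refines_cover \<beta> \<U>"
    using small_open_covers_refine[OF assms(1) \<U>(1)] by blast
  have "eventually (\<lambda>n. cover_diam (\<alpha> n) < \<delta>) sequentially"
    using assms(5) \<open>\<delta> > 0\<close> by (rule order_tendstoD)
  then show "eventually (\<lambda>n. y < hA_cover X f a (\<alpha> n)) sequentially"
  proof eventually_elim
    case (elim n)
    have "hA_cover X f a \<U> \<le> hA_cover X f a (\<alpha> n)"
      using elim by (intro hA_cover_le_of_refines \<delta> assms)
    with \<U>(2) show ?case by order
  qed
next
  fix y assume "hA X f a < y"
  moreover have "hA_cover X f a (\<alpha> n) \<le> hA X f a" for n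
    using assms(1-3) assms(4) by (rule hA_cover_le_hA)
  ultimately show "eventually (\<lambda>n. hA_cover X f a (\<alpha> n) < y) sequentially"
    by (intro always_eventually allI) (blast intro: le_less_trans)
qed

theorem proposition2p4:
  fixes X :: "'a::metric_space set" and f :: "nat \<Rightarrow> 'a \<Rightarrow> 'a"
    and a :: "nat \<Rightarrow> nat" and \<alpha> :: "nat \<Rightarrow> 'a set set"
  assumes "compact X"
    and "\<And>n. continuous_on X (f n)" and "\<And>n. f n ` X \<subseteq> X"
    and "strict_mono_on {1..} a"
    and "\<And>n. open_cover X (\<alpha> n)"
    and "(\<lambda>n. cover_diam (\<alpha> n)) \<longlonglongrightarrow> 0"
  shows "(\<lambda>n. hA_cover X f a (\<alpha> n)) \<longlonglongrightarrow> hA X f a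
    \<and> ((\<lambda>\<delta>. SUP \<beta>\<in>{\<beta>. open_cover X \<beta> \<and> cover_diam \<beta> < \<delta>}. hA_cover X f a \<beta>)
           \<longlongrightarrow> hA X f a) (at_right 0)"
proof
  \<comment> \<open>The argument works for any sequence \<open>a\<close>.\<close>
  show lim: "(\<lambda>n. hA_cover X f a (\<alpha> n)) \<longlonglongrightarrow> hA X f a"
    using assms(1-3,5,6) by (rule hA_cover_tendsto_hA)
  let ?S = "\<lambda>\<delta>. SUP \<beta>\<in>{\<beta>. open_cover X \<beta> \<and> cover_diam \<beta> < \<delta>}. hA_cover X f a \<beta>"
  show "(?S \<longlongrightarrow> hA X f a) (at_right 0)"
  proof (rule order_tendstoI)
    fix y assume "y < hA X f a"
    have S_gt: "y < ?S \<delta>" if "\<delta> > 0" for \<delta> :: real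
    proof -
      have "eventually (\<lambda>n. cover_diam (\<alpha> n) < \<delta> \<and> y < hA_cover X f a (\<alpha> n)) sequentially"
        using order_tendstoD(2)[OF assms(6) \<open>\<delta> > 0\<close>] order_tendstoD(1)[OF lim \<open>y < hA X f a\<close>]
        by (rule eventually_conj)
      then obtain n where "cover_diam (\<alpha> n) < \<delta>" "y < hA_cover X f a (\<alpha> n)"
        using eventually_happens'[OF sequentially_bot] by blast
      with assms(5) show ?thesis
        unfolding less_SUP_iff by blast
    qed
    show "eventually (\<lambda>\<delta>. y < ?S \<delta>) (at_right 0)"
      using eventually_at_right_less S_gt by (rule eventually_mono)
  next
    fix y assume "hA X f a < y"
    moreover have "?S \<delta> \<le> hA X f a" for \<delta>
    proof (rule SUP_least)
      fix \<beta> assume "\<beta> \<in> {\<beta>. open_cover X \<beta> \<and> cover_diam \<beta> < \<delta>}"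
      then show "hA_cover X f a \<beta> \<le> hA X f a"
        using assms(1-3) by (intro hA_cover_le_hA) auto
    qed
    ultimately show "eventually (\<lambda>\<delta>. ?S \<delta> < y) (at_right 0)"
      by (intro always_eventually allI) (blast intro: le_less_trans)
  qed
qed

end
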